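(* Let $0<p<1$, $q=1-p$, and let $X\sim\mathcal{UNB}(2,p)$. Then $P(X=x)=p(1-p)^x$ for all $x=0,1,2,\dots$, i.e. $X$ is geometric with parameter $p$.
   Context: $\mathcal{UNB}(r,p)$ ($r>0$, $0<p<1$) is the law of $X$ where $N$ is negative binomial with $P(N=n)=\binom{r+n-1}{n}p^rq^n$, $n\ge0$, and $X\mid N=n$ is uniform on $\{0,1,\dots,n\}$; its pmf is $\frac{q^xp^r}{1+x}\binom{r+x-1}{x}{}_2F_1(1,r+x;2+x;q)$, where ${}_2F_1$ is the Gauss hypergeometric function. *)

theory Defs
  imports "HOL-Probability.Probability"
begin

definition negbin_weight :: "real \<Rightarrow> real \<Rightarrow> nat \<Rightarrow> real" where
  "negbin_weight r p n = ((r + real n - 1) gchoose n) * p powr r * (1 - p) ^ n"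

definition negbin_pmf :: "real \<Rightarrow> real \<Rightarrow> nat pmf" where
  "negbin_pmf r p = embed_pmf (negbin_weight r p)"

definition unb_pmf :: "real \<Rightarrow> real \<Rightarrow> nat pmf" where
  "unb_pmf r p = bind_pmf (negbin_pmf r p) (\<lambda>n. pmf_of_set {0..n})"

end

theory Submission
  imports Defs
begin

text \<open>The weights of \<open>NB(r, p)\<close> sum to \<open>1\<close> by Newton's binomial series for
  \<open>(1 - q) powr (- r)\<close>. For \<open>r = 2\<close> the weight of \<open>n\<close> is \<open>p\<^sup>2 (n + 1) q\<^sup>n\<close>, whose factor
  \<open>n + 1\<close> cancels the uniform weight \<open>1 / (n + 1)\<close> of each \<open>x \<le> n\<close>; hence
  \<open>P(X = x) = p\<^sup>2 (q\<^sup>x + q\<^sup>x\<^sup>+\<^sup>1 + \<dots>) = p q\<^sup>x\<close>.\<close>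

lemma gbinomial_minus_mult_power_minus:
  fixes r q :: real
  shows "((- r) gchoose n) * (- q) ^ n = ((r + real n - 1) gchoose n) * q ^ n"
proof -
  have "((- r) gchoose n) * (- q) ^ n = ((-1) * (-1)) ^ n * ((r + real n - 1) gchoose n) * q ^ n"
    unfolding gbinomial_minus power_minus[of q] power_mult_distrib by (simp only: mult_ac)
  then show ?thesis
    by simp
qed

lemma negbin_weight_sums:
  assumes "0 < p" "p < 1"
  shows "negbin_weight r p sums 1"
proof -
  have "(\<lambda>n. ((- r) gchoose n) * (- (1 - p)) ^ n) sums (1 + - (1 - p)) powr (- r)"
    by (rule gen_binomial_real) (use assms in simp)
  then have "(\<lambda>n. ((r + real n - 1) gchoose n) * (1 - p) ^ n) sums p powr (- r)"
    unfolding gbinomial_minus_mult_power_minus by simp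
  then have "(\<lambda>n. p powr r * (((r + real n - 1) gchoose n) * (1 - p) ^ n))
      sums (p powr r * p powr (- r))"
    by (rule sums_mult)
  moreover have "p powr r * p powr (- r) = 1"
    using assms by (simp add: powr_minus)
  ultimately show ?thesis
    unfolding negbin_weight_def[abs_def] by (simp add: mult_ac)
qed

lemma negbin_weight_nonneg:
  assumes "0 < r" "0 < p" "p < 1"
  shows "0 \<le> negbin_weight r p n"
proof -
  have "(r + real n - 1) gchoose n = pochhammer r n / fact n"
    by (simp add: gbinomial_pochhammer')
  then show ?thesis
    using assms by (simp add: negbin_weight_def pochhammer_pos less_imp_le)
qed

lemma pmf_negbin_pmf:
  assumes "0 < r" "0 < p" "p < 1"
  shows "pmf (negbin_pmf r p) n = negbin_weight r p n"
  unfolding negbin_pmf_def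
proof (rule pmf_embed_pmf)
  show "0 \<le> negbin_weight r p n" for n
    by (rule negbin_weight_nonneg[OF assms])
  then show "(\<integral>\<^sup>+ n. ennreal (negbin_weight r p n) \<partial>count_space UNIV) = 1"
    unfolding nn_integral_count_space_nat
    by (simp add: suminf_ennreal_eq[OF _ negbin_weight_sums[OF assms(2,3)]] del: suminf_ennreal)
qed

lemma negbin_weight_two:
  assumes "0 < p"
  shows "negbin_weight 2 p n = p\<^sup>2 * (real n + 1) * (1 - p) ^ n"
proof -
  have "(2 + real n - 1) gchoose n = real (Suc n choose n)"
    using binomial_gbinomial[of "Suc n" n, where 'a=real] by (simp add: add.commute)
  then show ?thesis
    using assms by (simp add: negbin_weight_def powr_realpow binomial_Suc_n)
qed

lemma pmf_bind_pmf_sums: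
  fixes N :: "nat pmf"
  shows "(\<lambda>n. pmf N n * pmf (f n) x) sums pmf (bind_pmf N f) x"
proof -
  have series: "(\<Sum>n. ennreal (pmf N n * pmf (f n) x)) = ennreal (pmf (bind_pmf N f) x)"
    by (simp add: ennreal_pmf_bind nn_integral_measure_pmf nn_integral_count_space_nat
        ennreal_mult')
  then have "summable (\<lambda>n. pmf N n * pmf (f n) x)"
    by (intro summable_suminf_not_top) auto
  moreover from this series have "(\<Sum>n. pmf N n * pmf (f n) x) = pmf (bind_pmf N f) x"
    by (simp add: suminf_ennreal2 suminf_nonneg)
  ultimately show ?thesis
    by (simp add: summable_sums_iff)
qed

lemma geometric_tail_sums:
  fixes q :: real
  assumes "\<bar>q\<bar> < 1"
  shows "(\<lambda>n. if k \<le> n then q ^ n else 0) sums (q ^ k / (1 - q))"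
proof -
  let ?tail = "\<lambda>n. if k \<le> n then q ^ n else 0"
  have "(\<lambda>n. q ^ k * q ^ n) sums (q ^ k * (1 / (1 - q)))"
    by (intro sums_mult geometric_sums) (use assms in simp)
  then have "(\<lambda>n. ?tail (n + k)) sums (q ^ k / (1 - q))"
    by (simp add: power_add mult.commute)
  moreover have "sum ?tail {..<k} = 0"
    by simp
  ultimately show ?thesis
    using sums_iff_shift[of ?tail k] by simp
qed

theorem mainTheorem6:
  fixes p :: real and x :: nat
  assumes "0 < p" and "p < 1"
  shows "pmf (unb_pmf 2 p) x = p * (1 - p) ^ x"
proof -
  have summand: "pmf (negbin_pmf 2 p) n * pmf (pmf_of_set {0..n}) x
      = p\<^sup>2 * (if x \<le> n then (1 - p) ^ n else 0)" for n
    using assms by (simp add: pmf_negbin_pmf negbin_weight_two add.commute)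
  have "(\<lambda>n. p\<^sup>2 * (if x \<le> n then (1 - p) ^ n else 0))
      sums (p\<^sup>2 * ((1 - p) ^ x / (1 - (1 - p))))"
    by (intro sums_mult geometric_tail_sums) (use assms in simp)
  moreover have "p\<^sup>2 * ((1 - p) ^ x / (1 - (1 - p))) = p * (1 - p) ^ x"
    using assms by (simp add: power2_eq_square)
  ultimately show ?thesis
    using pmf_bind_pmf_sums[of "negbin_pmf 2 p" "\<lambda>n. pmf_of_set {0..n}" x]
    unfolding unb_pmf_def summand by (simp add: sums_unique2)
qed

end
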